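(* Let $D\subset\mathbb{C}^n$ be a bounded $\alpha$-regular domain, $E\subset D$, and $\psi$ a bounded function on $E$ with $\sup_E\psi<0$. Then for all $z\in D$, \[ -\inf_{w\in E}\psi(w)\,\omega^*_\alpha(z,E,D)\le\omega^*_\alpha(z,E,D,\psi)\le-\sup_{w\in E}\psi(w)\,\omega^*_\alpha(z,E,D). \]
   Context: Fix a closed, strictly positive differential form $\alpha$ of bidegree $(n-1,n-1)$ with $C^1$ coefficients on an open subset of $\mathbb{C}^n$ containing all sets considered. Let $d=\partial+\bar\partial$, $d^c=(\bar\partial-\partial)/(4i)$. For an open set $\Omega$, $u\in L^1_{loc}(\Omega)$ is $\alpha$-subharmonic ($u\in\alpha\text{-}sh(\Omega)$) if it is strongly upper semicontinuous (upper semicontinuous, and for every $z^0\in\Omega$ and every set $A$ of full Lebesgue measure near $z^0$, $\limsup_{z\to z^0,z\in A}u(z)=u(z^0)$) and $\int u\,\alpha\wedge dd^c\omega\ge0$ for every nonnegative test function $\omega$; $u\equiv-\infty$ is also allowed. A bounded domain $D$ is $\alpha$-regular if there is $\rho\in\alpha\text{-}sh(D)$ with $\rho<0$ on $D$ and $\rho\to0$ at $\partial D$. $\mathcal U(E,D,\psi)$ is the class of $u\in\alpha\text{-}sh(D)$ with $u<0$ on $D$ and $u\le\psi$ on $E$; $\omega_\alpha(z,E,D,\psi)=\sup\{u(z):u\in\mathcal U(E,D,\psi)\}$ and $\omega^*_\alpha(z,E,D,\psi)=\limsup_{w\to z}\omega_\alpha(w,E,D,\psi)$. The unweighted $\alpha$-subharmonic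 measure is $\omega^*_\alpha(z,E,D):=\omega^*_\alpha(z,E,D,-1)$ (i.e. with $\psi\equiv-1$). *)

theory Defs
  imports "HOL-Analysis.Analysis"
begin

definition px :: "'n::finite \<Rightarrow> (complex^'n \<Rightarrow> complex) \<Rightarrow> complex^'n \<Rightarrow> complex" where
  "px j f x = frechet_derivative f (at x) (axis j 1)"

definition py :: "'n::finite \<Rightarrow> (complex^'n \<Rightarrow> complex) \<Rightarrow> complex^'n \<Rightarrow> complex" where
  "py j f x = frechet_derivative f (at x) (axis j \<i>)"

definition dz :: "'n::finite \<Rightarrow> (complex^'n \<Rightarrow> complex) \<Rightarrow> complex^'n \<Rightarrow> complex" where
  "dz j f x = (px j f x - \<i> * py j f x) / 2"

definition dzb :: "'n::finite \<Rightarrow> (complex^'n \<Rightarrow> complex) \<Rightarrow> complex^'n \<Rightarrow> complex" where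
  "dzb j f x = (px j f x + \<i> * py j f x) / 2"

fun dderiv :: "'a::real_normed_vector list \<Rightarrow> ('a \<Rightarrow> 'b::real_normed_vector) \<Rightarrow> 'a \<Rightarrow> 'b" where
  "dderiv [] f = f"
| "dderiv (v # vs) f = (\<lambda>x. frechet_derivative (dderiv vs f) (at x) v)"

definition smooth_fun :: "('a::real_normed_vector \<Rightarrow> 'b::real_normed_vector) \<Rightarrow> bool" where
  "smooth_fun f \<longleftrightarrow> (\<forall>vs x. dderiv vs f differentiable (at x))"

definition nonneg_test_fun :: "(complex^'n::finite) set \<Rightarrow> (complex^'n \<Rightarrow> real) \<Rightarrow> bool" where
  "nonneg_test_fun \<Omega> \<omega> \<longleftrightarrow> smooth_fun \<omega> \<and> (\<forall>x. 0 \<le> \<omega> x) \<and>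
     compact (closure {x. \<omega> x \<noteq> 0}) \<and> closure {x. \<omega> x \<noteq> 0} \<subseteq> \<Omega>"

definition C1_on :: "(complex^'n::finite) set \<Rightarrow> (complex^'n \<Rightarrow> complex) \<Rightarrow> bool" where
  "C1_on U f \<longleftrightarrow> (\<forall>x\<in>U. f differentiable (at x)) \<and>
     (\<forall>v. continuous_on U (\<lambda>x. frechet_derivative f (at x) v))"

text \<open>An (n-1,n-1)-form alpha is represented by its coefficient matrix a j k w.r.t. the basis
  alpha_{jk} dual to i dz_j /\ dzbar_k (i.e. alpha_{jk} /\ i dz_l /\ dzbar_m = delta_{jl} delta_{km} dV).
  Then alpha /\ i b /\ bbar = (sum a_jk b_j cnj b_k) dV, and
  alpha /\ dd^c w is a positive constant multiple of (sum a_jk d_j dbar_k w) dV.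
  Strict positivity = the Hermitian matrix (a_jk) is positive definite;
  d alpha = 0 iff sum_j d_j a_jk = 0 for all k and sum_k dbar_k a_jk = 0 for all j.\<close>

definition alpha_form :: "(complex^'n::finite) set \<Rightarrow> ('n \<Rightarrow> 'n \<Rightarrow> complex^'n \<Rightarrow> complex) \<Rightarrow> bool" where
  "alpha_form U a \<longleftrightarrow> open U \<and>
     (\<forall>j k. C1_on U (a j k)) \<and>
     (\<forall>x\<in>U. \<forall>j k. a j k x = cnj (a k j x)) \<and>
     (\<forall>x\<in>U. \<forall>v::complex^'n. v \<noteq> 0 \<longrightarrow>
         0 < Re (\<Sum>j\<in>UNIV. \<Sum>k\<in>UNIV. a j k x * v$j * cnj (v$k))) \<and>
     (\<forall>x\<in>U. \<forall>k. (\<Sum>j\<in>UNIV. dz j (a j k) x) = 0) \<and>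
     (\<forall>x\<in>U. \<forall>j. (\<Sum>k\<in>UNIV. dzb k (a j k) x) = 0)"

definition alpha_ddc :: "('n::finite \<Rightarrow> 'n \<Rightarrow> complex^'n \<Rightarrow> complex) \<Rightarrow> (complex^'n \<Rightarrow> real) \<Rightarrow> complex^'n \<Rightarrow> real" where
  "alpha_ddc a \<omega> x = Re (\<Sum>j\<in>UNIV. \<Sum>k\<in>UNIV.
       a j k x * dz j (dzb k (\<lambda>y. complex_of_real (\<omega> y))) x)"

definition loc_integrable :: "(complex^'n::finite) set \<Rightarrow> (complex^'n \<Rightarrow> ereal) \<Rightarrow> bool" where
  "loc_integrable \<Omega> u \<longleftrightarrow> (\<forall>K. compact K \<and> K \<subseteq> \<Omega> \<longrightarrow>
      (AE x in lborel. x \<in> K \<longrightarrow> \<bar>u x\<bar> \<noteq> \<infinity>) \<and>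
      set_integrable lborel K (\<lambda>x. real_of_ereal (u x)))"

definition strongly_usc :: "(complex^'n::finite) set \<Rightarrow> (complex^'n \<Rightarrow> ereal) \<Rightarrow> bool" where
  "strongly_usc \<Omega> u \<longleftrightarrow> (\<forall>z0\<in>\<Omega>. Limsup (at z0) u \<le> u z0 \<and>
      (\<forall>A. (\<exists>r>0. ball z0 r - A \<in> null_sets lebesgue) \<longrightarrow> Limsup (at z0 within A) u = u z0))"

definition alpha_sh :: "('n::finite \<Rightarrow> 'n \<Rightarrow> complex^'n \<Rightarrow> complex) \<Rightarrow> (complex^'n) set \<Rightarrow> (complex^'n \<Rightarrow> ereal) \<Rightarrow> bool" where
  "alpha_sh a \<Omega> u \<longleftrightarrow> (\<forall>x\<in>\<Omega>. u x = -\<infinity>) \<or>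
     (loc_integrable \<Omega> u \<and> (\<forall>x\<in>\<Omega>. u x < \<infinity>) \<and> strongly_usc \<Omega> u \<and>
      (\<forall>\<omega>. nonneg_test_fun \<Omega> \<omega> \<longrightarrow>
          0 \<le> (\<integral>x. real_of_ereal (u x) * alpha_ddc a \<omega> x \<partial>lborel)))"

definition alpha_regular :: "('n::finite \<Rightarrow> 'n \<Rightarrow> complex^'n \<Rightarrow> complex) \<Rightarrow> (complex^'n) set \<Rightarrow> bool" where
  "alpha_regular a D \<longleftrightarrow> open D \<and> connected D \<and> bounded D \<and>
     (\<exists>\<rho>. alpha_sh a D \<rho> \<and> (\<forall>z\<in>D. \<rho> z < 0) \<and>
          (\<forall>\<xi>\<in>frontier D. (\<rho> \<longlongrightarrow> 0) (at \<xi> within D)))"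

definition UU :: "('n::finite \<Rightarrow> 'n \<Rightarrow> complex^'n \<Rightarrow> complex) \<Rightarrow> (complex^'n) set \<Rightarrow> (complex^'n) set
    \<Rightarrow> (complex^'n \<Rightarrow> real) \<Rightarrow> (complex^'n \<Rightarrow> ereal) set" where
  "UU a E D \<psi> = {u. alpha_sh a D u \<and> (\<forall>z\<in>D. u z < 0) \<and> (\<forall>z\<in>E. u z \<le> ereal (\<psi> z))}"

definition omega_alpha where
  "omega_alpha a E D \<psi> z = (SUP u\<in>UU a E D \<psi>. u z)"

definition omega_alpha_star where
  "omega_alpha_star a E D \<psi> z = sup (omega_alpha a E D \<psi> z) (Limsup (at z) (omega_alpha a E D \<psi>))"

end

theory Submission
  imports Defs
begin

(* Multiplication by a constant c > 0 preserves alpha-subharmonicity and negativity, so it maps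
   U(E,D,phi) into U(E,D,psi) whenever c phi <= psi on E; hence c omega(.,E,D,phi) <= omega(.,E,D,psi),
   and the same holds for the upper regularizations, since Limsup commutes with positive scaling.
   The lower bound is the case c = -inf psi, phi = -1; the upper bound follows from the case
   c = 1 / (-sup psi) with the pair (psi, -1) in place of (phi, psi). *)

lemma Limsup_ereal_cmult:
  fixes f :: "'a \<Rightarrow> ereal"
  assumes "(c::real) > 0"
  shows "Limsup F (\<lambda>x. ereal c * f x) = ereal c * Limsup F f"
proof (cases "F = bot")
  case True
  then show ?thesis using assms by (simp add: bot_ereal_def)
next
  case False
  then show ?thesis using assms by (simp add: Limsup_ereal_mult_left)
qed

lemma alpha_sh_cmult:
  assumes c: "(c::real) > 0" and u: "alpha_sh a \<Omega> u"
  shows "alpha_sh a \<Omega> (\<lambda>x. ereal c * u x)"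
proof (cases "\<forall>x\<in>\<Omega>. u x = - \<infinity>")
  case True
  then show ?thesis using c unfolding alpha_sh_def by auto
next
  case False
  then have li: "loc_integrable \<Omega> u" and lt: "\<forall>x\<in>\<Omega>. u x < \<infinity>" and su: "strongly_usc \<Omega> u"
    and int: "\<forall>\<omega>. nonneg_test_fun \<Omega> \<omega> \<longrightarrow> 0 \<le> (\<integral>x. real_of_ereal (u x) * alpha_ddc a \<omega> x \<partial>lborel)"
    using u unfolding alpha_sh_def by blast+
  have "loc_integrable \<Omega> (\<lambda>x. ereal c * u x)"
    using li c unfolding loc_integrable_def by (simp add: ereal_abs_mult set_integrable_mult_right)
  moreover have "\<forall>x\<in>\<Omega>. ereal c * u x < \<infinity>"
    using lt c by (simp add: less_top[symmetric])
  moreover have "strongly_usc \<Omega> (\<lambda>x. ereal c * u x)"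
    using su c unfolding strongly_usc_def
    by (auto simp: Limsup_ereal_cmult ereal_mult_left_mono)
  moreover have "\<forall>\<omega>. nonneg_test_fun \<Omega> \<omega> \<longrightarrow>
      0 \<le> (\<integral>x. real_of_ereal (ereal c * u x) * alpha_ddc a \<omega> x \<partial>lborel)"
    using int c by (simp add: mult.assoc)
  ultimately show ?thesis unfolding alpha_sh_def by blast
qed

lemma cmult_in_UU:
  assumes c: "(c::real) > 0" and u: "u \<in> UU a E D \<phi>" and le: "\<And>w. w \<in> E \<Longrightarrow> c * \<phi> w \<le> \<psi> w"
  shows "(\<lambda>x. ereal c * u x) \<in> UU a E D \<psi>"
proof -
  have sh: "alpha_sh a D u" and neg: "\<And>x. x \<in> D \<Longrightarrow> u x < 0"
    and onE: "\<And>w. w \<in> E \<Longrightarrow> u w \<le> ereal (\<phi> w)"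
    using u unfolding UU_def by auto
  have "ereal c * u x < 0" if "x \<in> D" for x
    using neg[OF that] c by (simp add: ereal_mult_less_0_iff)
  moreover have "ereal c * u w \<le> ereal (\<psi> w)" if "w \<in> E" for w
  proof -
    have "ereal c * u w \<le> ereal c * ereal (\<phi> w)"
      using onE[OF that] c by (intro ereal_mult_left_mono) auto
    also have "\<dots> \<le> ereal (\<psi> w)"
      using le[OF that] by simp
    finally show ?thesis .
  qed
  ultimately show ?thesis
    using alpha_sh_cmult[OF c sh] unfolding UU_def by blast
qed

lemma omega_alpha_cmult_le:
  assumes c: "(c::real) > 0" and le: "\<And>w. w \<in> E \<Longrightarrow> c * \<phi> w \<le> \<psi> w"
  shows "ereal c * omega_alpha a E D \<phi> x \<le> omega_alpha a E D \<psi> x"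
proof (cases "UU a E D \<phi> = {}")
  case True
  then show ?thesis using c by (simp add: omega_alpha_def bot_ereal_def)
next
  case False
  have "ereal c * omega_alpha a E D \<phi> x = (SUP u\<in>UU a E D \<phi>. ereal c * u x)"
    unfolding omega_alpha_def using False c by (simp add: Sup_ereal_mult_left')
  also have "\<dots> \<le> omega_alpha a E D \<psi> x"
    unfolding omega_alpha_def
    by (intro SUP_least SUP_upper2[OF cmult_in_UU[OF c _ le]]) auto
  finally show ?thesis .
qed

lemma ereal_cmult_sup:
  assumes "(c::real) \<ge> 0"
  shows "ereal c * sup x y = sup (ereal c * x) (ereal c * y)"
proof -
  have "mono (\<lambda>x. ereal c * x)"
    using assms by (intro monoI ereal_mult_left_mono) auto
  then show ?thesis by (simp add: sup_max max_of_mono)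
qed

lemma omega_alpha_star_cmult_le:
  assumes c: "(c::real) > 0" and le: "\<And>w. w \<in> E \<Longrightarrow> c * \<phi> w \<le> \<psi> w"
  shows "ereal c * omega_alpha_star a E D \<phi> z \<le> omega_alpha_star a E D \<psi> z"
proof -
  let ?f = "omega_alpha a E D \<phi>" and ?g = "omega_alpha a E D \<psi>"
  have fg: "ereal c * ?f x \<le> ?g x" for x
    using omega_alpha_cmult_le c le by blast
  have "ereal c * omega_alpha_star a E D \<phi> z = sup (ereal c * ?f z) (Limsup (at z) (\<lambda>x. ereal c * ?f x))"
    using c by (simp only: omega_alpha_star_def ereal_cmult_sup Limsup_ereal_cmult less_imp_le)
  also have "\<dots> \<le> sup (?g z) (Limsup (at z) ?g)"
    using fg by (intro sup_mono Limsup_mono) auto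
  finally show ?thesis by (simp add: omega_alpha_star_def)
qed

theorem lemma4p3:
  fixes U D E :: "(complex^'n::finite) set"
    and a :: "'n \<Rightarrow> 'n \<Rightarrow> complex^'n \<Rightarrow> complex"
    and \<psi> :: "complex^'n \<Rightarrow> real"
  assumes "alpha_form U a"
    and "D \<subseteq> U"
    and "alpha_regular a D"
    and "E \<subseteq> D" and "E \<noteq> {}"
    and "bounded (\<psi> ` E)"
    and "(SUP w\<in>E. \<psi> w) < 0"
    and "z \<in> D"
  shows "ereal (- (INF w\<in>E. \<psi> w)) * omega_alpha_star a E D (\<lambda>_. -1) z \<le> omega_alpha_star a E D \<psi> z
       \<and> omega_alpha_star a E D \<psi> z \<le> ereal (- (SUP w\<in>E. \<psi> w)) * omega_alpha_star a E D (\<lambda>_. -1) z"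
proof
  define i s where "i = (INF w\<in>E. \<psi> w)" and "s = (SUP w\<in>E. \<psi> w)"
  have i_le: "i \<le> \<psi> w" and le_s: "\<psi> w \<le> s" if "w \<in> E" for w
    using that assms(6) unfolding i_def s_def
    by (auto intro: cINF_lower cSUP_upper bounded_imp_bdd_below bounded_imp_bdd_above)
  have "s < 0" using assms(7) s_def by simp
  moreover have "i < 0" using i_le le_s \<open>s < 0\<close> assms(5) by force
  ultimately show "ereal (- i) * omega_alpha_star a E D (\<lambda>_. -1) z \<le> omega_alpha_star a E D \<psi> z"
    using i_le by (intro omega_alpha_star_cmult_le) auto
  have "ereal (- 1 / s) * omega_alpha_star a E D \<psi> z \<le> omega_alpha_star a E D (\<lambda>_. -1) z"
    using le_s \<open>s < 0\<close> by (intro omega_alpha_star_cmult_le) (auto simp: field_simps)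
  then have "ereal (- s) * (ereal (- 1 / s) * omega_alpha_star a E D \<psi> z)
      \<le> ereal (- s) * omega_alpha_star a E D (\<lambda>_. -1) z"
    using \<open>s < 0\<close> by (intro ereal_mult_left_mono) auto
  then show "omega_alpha_star a E D \<psi> z \<le> ereal (- s) * omega_alpha_star a E D (\<lambda>_. -1) z"
    using \<open>s < 0\<close> by (simp add: mult.assoc[symmetric])
qed

end
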